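(* Let $p\in\Delta_d$ and let $\pi$ be a permutation of $[d]$ with $p_{(i)}:=p_{\pi(i)}$ non-increasing in $i$, and suppose $\tfrac12< p_{(1)}<\tfrac56$. Fix $h\in\{2,\dots,d\}$ with $p_{(h)}>0$ and define the $(h-1)$-parameter sub-model: for $\theta=(\theta_2,\dots,\theta_h)$, let $P_\theta$ be the distribution on $[d]$ with $P_\theta(\pi(i))=\theta_i$ for $2\le i\le h$, $P_\theta(\pi(1))=\theta_1:=1-\sum_{i=2}^h\theta_i-\sum_{i=h+1}^d p_{(i)}$, and $P_\theta(\pi(i))=p_{(i)}$ for $i>h$. Let $\theta(p)=(p_{(2)},\dots,p_{(h)})$, let $0<B\le p_{(h)}/3$ and $\mathcal{N}_{B,h}(p)=\theta(p)+[-B,B]^{h-1}$. Then $P_{\theta'}$ is a valid distribution for all $\theta'\in\mathcal{N}_{B,h}(p)$, and for every channel $W$ from $[d]$ to a finite alphabet $\mathcal{Y}$ with $|\mathcal{Y}|\le 2^b$ and every $\theta'\in\mathcal{N}_{B,h}(p)$, $$\operatorname{Tr}\left(I_W(\theta')\right)\le 2^b\left(6h+\frac{3}{2p_{(h)}}\right)+\frac{3h}{2p_{(h)}},$$ where $I_W(\theta')$ is the Fisher information matrix (with respect to $(\theta_2,\dots,\theta_h)$) of $Y\sim W(\cdot\mid X)$, $X\sim P_{\theta'}$.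
   Context: $\Delta_d$ denotes the probability simplex in $\mathbb{R}^d$. The Fisher information matrix of $Y$ is $[I_W(\theta)]_{jk}=\sum_{y}\frac{\partial_{\theta_j}P^Y_\theta(y)\,\partial_{\theta_k}P^Y_\theta(y)}{P^Y_\theta(y)}$ where $P^Y_\theta(y)=\sum_x W(y\mid x)P_\theta(x)$. *)

theory Defs
  imports "HOL-Analysis.Analysis"
begin

definition in_simplex :: "nat \<Rightarrow> (nat \<Rightarrow> real) \<Rightarrow> bool" where
  "in_simplex d p \<longleftrightarrow> (\<forall>i\<in>{1..d}. 0 \<le> p i) \<and> (\<Sum>i=1..d. p i) = 1"

text \<open>The (h-1)-parameter sub-model P_theta; theta is read only at indices 2..h.\<close>
definition sub_model ::
  "nat \<Rightarrow> (nat \<Rightarrow> real) \<Rightarrow> (nat \<Rightarrow> nat) \<Rightarrow> nat \<Rightarrow> (nat \<Rightarrow> real) \<Rightarrow> nat \<Rightarrow> real" where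
  "sub_model d p \<pi> h \<theta> x =
     (let i = inv_into {1..d} \<pi> x in
      if i = 1 then 1 - (\<Sum>k=2..h. \<theta> k) - (\<Sum>k=h+1..d. p (\<pi> k))
      else if i \<le> h then \<theta> i else p (\<pi> i))"

definition out_dist :: "nat \<Rightarrow> ('y \<Rightarrow> nat \<Rightarrow> real) \<Rightarrow> (nat \<Rightarrow> real) \<Rightarrow> 'y \<Rightarrow> real" where
  "out_dist d W P y = (\<Sum>x=1..d. W y x * P x)"

definition is_channel :: "nat \<Rightarrow> 'y set \<Rightarrow> ('y \<Rightarrow> nat \<Rightarrow> real) \<Rightarrow> bool" where
  "is_channel d Y W \<longleftrightarrow> finite Y \<and>
     (\<forall>x\<in>{1..d}. (\<forall>y\<in>Y. 0 \<le> W y x) \<and> (\<Sum>y\<in>Y. W y x) = 1)"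

definition partial_deriv :: "nat \<Rightarrow> ((nat \<Rightarrow> real) \<Rightarrow> real) \<Rightarrow> (nat \<Rightarrow> real) \<Rightarrow> real" where
  "partial_deriv j F \<theta> = deriv (\<lambda>t. F (\<theta>(j := t))) (\<theta> j)"

definition fisher_trace ::
  "nat \<Rightarrow> (nat \<Rightarrow> real) \<Rightarrow> (nat \<Rightarrow> nat) \<Rightarrow> nat \<Rightarrow> 'y set \<Rightarrow> ('y \<Rightarrow> nat \<Rightarrow> real)
    \<Rightarrow> (nat \<Rightarrow> real) \<Rightarrow> real" where
  "fisher_trace d p \<pi> h Y W \<theta> =
     (\<Sum>j=2..h. \<Sum>y\<in>Y.
        (partial_deriv j (\<lambda>t. out_dist d W (sub_model d p \<pi> h t) y) \<theta>)\<^sup>2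
        / out_dist d W (sub_model d p \<pi> h \<theta>) y)"

end

theory Submission
  imports Defs
begin

text \<open>Raising \<theta>_j moves mass from \<pi>(1) to \<pi>(j), so the output probability of y is affine in
  \<theta>_j with slope W(y|\<pi>(j)) - W(y|\<pi>(1)), and the j-th diagonal entry of the Fisher information
  is the sum over y of (W(y|\<pi>(j)) - W(y|\<pi>(1)))^2 / P^Y(y). Bounding P^Y(y) below by
  \<theta>_j W(y|\<pi>(j)) + \<theta>_1 W(y|\<pi>(1)) shows that this entry is at most 1/\<theta>_j + 1/\<theta>_1. On the
  neighbourhood \<theta>_j \<ge> 2p_(h)/3 and \<theta>_1 > 1/3, so the trace is at most (h - 1)(3/(2p_(h)) + 3),
  which is below the stated bound.\<close>

lemma sum_split_first_mid_tail:
  fixes f :: "nat \<Rightarrow> 'a::comm_monoid_add"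
  assumes "2 \<le> h" "h \<le> d"
  shows "(\<Sum>i=1..d. f i) = f 1 + (\<Sum>i=2..h. f i) + (\<Sum>i=h+1..d. f i)"
proof -
  have "{1..d} = insert 1 ({2..h} \<union> {h+1..d})" using assms by auto
  moreover have "sum f (insert 1 ({2..h} \<union> {h+1..d})) = f 1 + sum f ({2..h} \<union> {h+1..d})"
    using assms by (intro sum.insert) auto
  moreover have "sum f ({2..h} \<union> {h+1..d}) = sum f {2..h} + sum f {h+1..d}"
    by (rule sum.union_disjoint) auto
  ultimately show ?thesis by (simp add: add.assoc)
qed

lemma sum_mult_fun_upd:
  fixes f \<theta> :: "'a \<Rightarrow> 'b::comm_ring"
  assumes "finite A" "j \<in> A"
  shows "(\<Sum>k\<in>A. f k * (\<theta>(j := t)) k) = (\<Sum>k\<in>A. f k * \<theta> k) + f j * (t - \<theta> j)"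
proof -
  have "(\<Sum>k\<in>A. f k * (\<theta>(j := t)) k) = (\<Sum>k\<in>A. f k * \<theta> k + (if k = j then f j * (t - \<theta> j) else 0))"
    by (rule sum.cong) (auto simp: algebra_simps)
  with assms show ?thesis by (simp add: sum.distrib)
qed

lemma sum_reindex_permutes:
  assumes "\<pi> permutes S"
  shows "(\<Sum>x\<in>S. f x) = (\<Sum>i\<in>S. f (\<pi> i))"
  using sum.permute[OF assms, of f] by simp

lemma sub_model_permuted:
  assumes "\<pi> permutes {1..d}" "i \<in> {1..d}"
  shows "sub_model d p \<pi> h \<theta> (\<pi> i) =
    (if i = 1 then 1 - (\<Sum>k=2..h. \<theta> k) - (\<Sum>k=h+1..d. p (\<pi> k))
     else if i \<le> h then \<theta> i else p (\<pi> i))"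
  using assms by (simp add: sub_model_def permutes_inj_on)

lemma out_dist_permuted:
  assumes "\<pi> permutes {1..d}"
  shows "out_dist d W P y = (\<Sum>i=1..d. W y (\<pi> i) * P (\<pi> i))"
  unfolding out_dist_def by (rule sum_reindex_permutes[OF assms])

lemma out_dist_sub_model:
  assumes "\<pi> permutes {1..d}" "2 \<le> h" "h \<le> d"
  shows "out_dist d W (sub_model d p \<pi> h \<theta>) y =
    W y (\<pi> 1) * (1 - (\<Sum>k=2..h. \<theta> k) - (\<Sum>k=h+1..d. p (\<pi> k)))
    + (\<Sum>i=2..h. W y (\<pi> i) * \<theta> i) + (\<Sum>i=h+1..d. W y (\<pi> i) * p (\<pi> i))"
proof -
  have "(\<Sum>i=2..h. W y (\<pi> i) * sub_model d p \<pi> h \<theta> (\<pi> i)) = (\<Sum>i=2..h. W y (\<pi> i) * \<theta> i)"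
    "(\<Sum>i=h+1..d. W y (\<pi> i) * sub_model d p \<pi> h \<theta> (\<pi> i)) = (\<Sum>i=h+1..d. W y (\<pi> i) * p (\<pi> i))"
    using assms by (auto simp: sub_model_permuted intro!: sum.cong)
  moreover have "sub_model d p \<pi> h \<theta> (\<pi> 1) = 1 - (\<Sum>k=2..h. \<theta> k) - (\<Sum>k=h+1..d. p (\<pi> k))"
    using assms by (simp add: sub_model_permuted)
  ultimately show ?thesis
    unfolding out_dist_permuted[OF assms(1)] sum_split_first_mid_tail[OF assms(2,3)] by simp
qed

lemma out_dist_sub_model_fun_upd:
  assumes "\<pi> permutes {1..d}" "2 \<le> h" "h \<le> d" "j \<in> {2..h}"
  shows "out_dist d W (sub_model d p \<pi> h (\<theta>(j := t))) y =
    out_dist d W (sub_model d p \<pi> h \<theta>) y + (t - \<theta> j) * (W y (\<pi> j) - W y (\<pi> 1))"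
proof -
  have weighted: "(\<Sum>i=2..h. W y (\<pi> i) * (\<theta>(j := t)) i) = (\<Sum>i=2..h. W y (\<pi> i) * \<theta> i) + W y (\<pi> j) * (t - \<theta> j)"
    using assms(4) by (rule sum_mult_fun_upd[OF finite_atLeastAtMost])
  have total: "(\<Sum>k=2..h. (\<theta>(j := t)) k) = (\<Sum>k=2..h. \<theta> k) + (t - \<theta> j)"
    using sum_mult_fun_upd[OF finite_atLeastAtMost assms(4), of "\<lambda>_. 1" \<theta> t] by simp
  show ?thesis
    unfolding out_dist_sub_model[OF assms(1-3)] weighted total by (simp add: algebra_simps)
qed

lemma partial_deriv_out_dist_sub_model:
  assumes "\<pi> permutes {1..d}" "2 \<le> h" "h \<le> d" "j \<in> {2..h}"
  shows "partial_deriv j (\<lambda>\<theta>. out_dist d W (sub_model d p \<pi> h \<theta>) y) \<theta> = W y (\<pi> j) - W y (\<pi> 1)"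
proof -
  have "((\<lambda>t. out_dist d W (sub_model d p \<pi> h (\<theta>(j := t))) y)
          has_real_derivative W y (\<pi> j) - W y (\<pi> 1)) (at (\<theta> j))"
    unfolding out_dist_sub_model_fun_upd[OF assms] by (auto intro!: derivative_eq_intros)
  then show ?thesis unfolding partial_deriv_def by (rule DERIV_imp_deriv)
qed

lemma sq_diff_div_le:
  fixes a c s t P :: real
  assumes "0 \<le> a" "0 \<le> c" "0 < s" "0 < t" "s * a + t * c \<le> P"
  shows "(a - c)\<^sup>2 / P \<le> a / s + c / t"
proof (cases "P = 0")
  case False
  have "0 \<le> s * a + t * c" using assms by simp
  with False assms(5) have "0 < P" by linarith
  have "(a - c)\<^sup>2 \<le> a\<^sup>2 + c\<^sup>2"
    using assms by (simp add: power2_diff)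
  also have "\<dots> \<le> (a / s + c / t) * (s * a + t * c)"
    using assms by (simp add: field_simps power2_eq_square)
  also have "\<dots> \<le> (a / s + c / t) * P"
    using assms by (intro mult_left_mono) auto
  finally show ?thesis using \<open>0 < P\<close> by (simp add: divide_le_eq)
qed (use assms in simp)

lemma sum_sq_diff_div_out_dist_le:
  assumes "is_channel d Y W" "\<forall>x\<in>{1..d}. 0 \<le> P x"
    and "x \<in> {1..d}" "x' \<in> {1..d}" "x \<noteq> x'" "0 < P x" "0 < P x'"
  shows "(\<Sum>y\<in>Y. (W y x - W y x')\<^sup>2 / out_dist d W P y) \<le> 1 / P x + 1 / P x'"
proof -
  have W_nonneg: "0 \<le> W y z" if "y \<in> Y" "z \<in> {1..d}" for y z
    using assms(1) that unfolding is_channel_def by blast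
  have "(\<Sum>y\<in>Y. (W y x - W y x')\<^sup>2 / out_dist d W P y) \<le> (\<Sum>y\<in>Y. W y x / P x + W y x' / P x')"
  proof (rule sum_mono, rule sq_diff_div_le)
    fix y assume "y \<in> Y"
    then have "(\<Sum>z\<in>{x, x'}. W y z * P z) \<le> out_dist d W P y"
      unfolding out_dist_def using assms W_nonneg by (intro sum_mono2) auto
    then show "P x * W y x + P x' * W y x' \<le> out_dist d W P y"
      using assms(5) by (simp add: mult.commute)
  qed (use assms W_nonneg in auto)
  also have "\<dots> = 1 / P x + 1 / P x'"
    using assms unfolding is_channel_def
    by (simp add: sum.distrib sum_divide_distrib[symmetric])
  finally show ?thesis .
qed

lemma fisher_trace_le_sum_inverse:
  assumes "is_channel d Y W" "\<pi> permutes {1..d}" "2 \<le> h" "h \<le> d"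
    and "in_simplex d (sub_model d p \<pi> h \<theta>)" "\<forall>i\<in>{1..h}. 0 < sub_model d p \<pi> h \<theta> (\<pi> i)"
  shows "fisher_trace d p \<pi> h Y W \<theta> \<le> (\<Sum>j=2..h. 1 / \<theta> j + 1 / sub_model d p \<pi> h \<theta> (\<pi> 1))"
  unfolding fisher_trace_def
proof (rule sum_mono)
  fix j assume j: "j \<in> {2..h}"
  have "j \<in> {1..d}" "1 \<in> {1..d}" "j \<noteq> 1" using j assms(4) by auto
  then have "\<pi> j \<in> {1..d}" "\<pi> 1 \<in> {1..d}" "\<pi> j \<noteq> \<pi> 1"
    by (simp_all only: permutes_in_image[OF assms(2)] inj_eq[OF permutes_inj[OF assms(2)]] not_False_eq_True)
  moreover have "sub_model d p \<pi> h \<theta> (\<pi> j) = \<theta> j"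
    using j assms(2,4) by (simp add: sub_model_permuted)
  moreover have "0 < sub_model d p \<pi> h \<theta> (\<pi> j)" "0 < sub_model d p \<pi> h \<theta> (\<pi> 1)"
    using j assms(3,6) by auto
  moreover have "\<forall>x\<in>{1..d}. 0 \<le> sub_model d p \<pi> h \<theta> x"
    using assms(5) unfolding in_simplex_def by blast
  ultimately show "(\<Sum>y\<in>Y. (partial_deriv j (\<lambda>\<theta>. out_dist d W (sub_model d p \<pi> h \<theta>) y) \<theta>)\<^sup>2
                    / out_dist d W (sub_model d p \<pi> h \<theta>) y) \<le> 1 / \<theta> j + 1 / sub_model d p \<pi> h \<theta> (\<pi> 1)"
    using sum_sq_diff_div_out_dist_le[OF assms(1), of "sub_model d p \<pi> h \<theta>" "\<pi> j" "\<pi> 1"]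
    by (simp add: partial_deriv_out_dist_sub_model[OF assms(2-4) j])
qed

lemma sub_model_in_simplex:
  assumes "in_simplex d p" "\<pi> permutes {1..d}" "2 \<le> h" "h \<le> d"
    and "\<forall>i\<in>{1..h}. 0 \<le> sub_model d p \<pi> h \<theta> (\<pi> i)"
  shows "in_simplex d (sub_model d p \<pi> h \<theta>)"
proof -
  let ?P = "sub_model d p \<pi> h \<theta>"
  have nonneg: "0 \<le> ?P (\<pi> i)" if i: "i \<in> {1..d}" for i
  proof (cases "i \<le> h")
    case True
    with i assms(5) show ?thesis by simp
  next
    case False
    with i assms(2,3) have "?P (\<pi> i) = p (\<pi> i)"
      by (simp add: sub_model_permuted)
    moreover have "\<pi> i \<in> {1..d}"
      using i by (simp only: permutes_in_image[OF assms(2)])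
    ultimately show ?thesis using assms(1) unfolding in_simplex_def by simp
  qed
  have "0 \<le> ?P x" if "x \<in> {1..d}" for x
  proof -
    from that obtain i where "i \<in> {1..d}" "x = \<pi> i"
      using permutes_image[OF assms(2)] by blast
    with nonneg show ?thesis by simp
  qed
  moreover have "(\<Sum>x=1..d. ?P x) = 1"
  proof -
    have "(\<Sum>i=2..h. ?P (\<pi> i)) = (\<Sum>i=2..h. \<theta> i)"
      using assms(2,4) by (intro sum.cong) (simp_all add: sub_model_permuted)
    moreover have "(\<Sum>i=h+1..d. ?P (\<pi> i)) = (\<Sum>i=h+1..d. p (\<pi> i))"
      using assms(2,3) by (intro sum.cong) (simp_all add: sub_model_permuted)
    moreover have "?P (\<pi> 1) = 1 - (\<Sum>k=2..h. \<theta> k) - (\<Sum>k=h+1..d. p (\<pi> k))"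
      using assms(2-4) by (simp add: sub_model_permuted)
    moreover have "(\<Sum>x=1..d. ?P x) = (\<Sum>i=1..d. ?P (\<pi> i))"
      by (rule sum_reindex_permutes[OF assms(2)])
    ultimately show ?thesis
      unfolding sum_split_first_mid_tail[OF assms(3,4)] by simp
  qed
  ultimately show ?thesis unfolding in_simplex_def by blast
qed

lemma sub_model_neighbourhood_bounds:
  assumes "in_simplex d p" "\<pi> permutes {1..d}"
    and "\<forall>i j. 1 \<le> i \<and> i \<le> j \<and> j \<le> d \<longrightarrow> p (\<pi> j) \<le> p (\<pi> i)"
    and "1/2 < p (\<pi> 1)" "2 \<le> h" "h \<le> d" "B \<le> p (\<pi> h) / 3"
    and "\<forall>i\<in>{2..h}. \<bar>\<theta> i - p (\<pi> i)\<bar> \<le> B"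
  shows "\<forall>i\<in>{2..h}. 2 * p (\<pi> h) / 3 \<le> \<theta> i"
    and "1/3 < sub_model d p \<pi> h \<theta> (\<pi> 1)"
proof -
  have ge_last: "p (\<pi> h) \<le> p (\<pi> i)" if "i \<in> {2..h}" for i
    using assms(3)[rule_format, of i h] assms(6) that by simp
  have dev: "\<bar>\<theta> i - p (\<pi> i)\<bar> \<le> B" if "i \<in> {2..h}" for i
    using assms(8) that by blast
  show "\<forall>i\<in>{2..h}. 2 * p (\<pi> h) / 3 \<le> \<theta> i"
  proof
    fix i assume "i \<in> {2..h}"
    with ge_last dev have "p (\<pi> h) \<le> p (\<pi> i)" "\<bar>\<theta> i - p (\<pi> i)\<bar> \<le> B" by auto
    with assms(7) show "2 * p (\<pi> h) / 3 \<le> \<theta> i" by linarith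
  qed
  have "(\<Sum>i=1..d. p (\<pi> i)) = 1"
    using assms(1) sum_reindex_permutes[OF assms(2), of p] unfolding in_simplex_def by simp
  then have total: "p (\<pi> 1) + (\<Sum>i=2..h. p (\<pi> i)) + (\<Sum>i=h+1..d. p (\<pi> i)) = 1"
    by (simp only: sum_split_first_mid_tail[OF assms(5,6)])
  moreover have "0 \<le> (\<Sum>i=h+1..d. p (\<pi> i))"
  proof (rule sum_nonneg)
    fix i assume "i \<in> {h+1..d}"
    with assms(5) have "i \<in> {1..d}" by simp
    then have "\<pi> i \<in> {1..d}" by (simp only: permutes_in_image[OF assms(2)])
    with assms(1) show "0 \<le> p (\<pi> i)" unfolding in_simplex_def by blast
  qed
  ultimately have mid_le: "(\<Sum>i=2..h. p (\<pi> i)) \<le> 1 - p (\<pi> 1)" by linarith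
  have "sub_model d p \<pi> h \<theta> (\<pi> 1) = 1 - (\<Sum>i=2..h. \<theta> i) - (\<Sum>i=h+1..d. p (\<pi> i))"
    using assms(2,5,6) by (simp add: sub_model_permuted)
  with total have first: "sub_model d p \<pi> h \<theta> (\<pi> 1) = p (\<pi> 1) + (\<Sum>i=2..h. p (\<pi> i) - \<theta> i)"
    by (simp add: sum_subtractf)
  have "(\<Sum>i=2..h. 3 * B) \<le> (\<Sum>i=2..h. p (\<pi> i))"
  proof (rule sum_mono)
    fix i assume "i \<in> {2..h}"
    with ge_last assms(7) show "3 * B \<le> p (\<pi> i)" by fastforce
  qed
  moreover have "(\<Sum>i=2..h. - B) \<le> (\<Sum>i=2..h. p (\<pi> i) - \<theta> i)"
  proof (rule sum_mono)
    fix i assume "i \<in> {2..h}"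
    with dev show "- B \<le> p (\<pi> i) - \<theta> i" by fastforce
  qed
  ultimately show "1/3 < sub_model d p \<pi> h \<theta> (\<pi> 1)"
    using mid_le first assms(4) by simp
qed

lemma sub_model_pos:
  assumes "\<pi> permutes {1..d}" "h \<le> d"
    and "\<forall>j\<in>{2..h}. 0 < \<theta> j" "0 < sub_model d p \<pi> h \<theta> (\<pi> 1)"
  shows "\<forall>i\<in>{1..h}. 0 < sub_model d p \<pi> h \<theta> (\<pi> i)"
proof
  fix i assume i: "i \<in> {1..h}"
  show "0 < sub_model d p \<pi> h \<theta> (\<pi> i)"
  proof (cases "i = 1")
    case False
    with i assms(3) have "0 < \<theta> i" by simp
    with i False assms(1,2) show ?thesis by (simp add: sub_model_permuted)
  qed (use assms(4) in simp)
qed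

lemma sum_inverse_weights_le:
  fixes \<theta> :: "nat \<Rightarrow> real"
  assumes "2 \<le> h" "0 < c" "\<forall>j\<in>{2..h}. 2 * c / 3 \<le> \<theta> j" "1/3 < \<theta>\<^sub>1"
  shows "(\<Sum>j=2..h. 1 / \<theta> j + 1 / \<theta>\<^sub>1) \<le> (real h - 1) * (3 / (2 * c) + 3)"
proof -
  have "(\<Sum>j=2..h. 1 / \<theta> j + 1 / \<theta>\<^sub>1) \<le> (\<Sum>j=2..h. 3 / (2 * c) + 3)"
  proof (rule sum_mono, rule add_mono)
    fix j assume "j \<in> {2..h}"
    with assms(3) have "2 * c / 3 \<le> \<theta> j" by blast
    then have "1 / \<theta> j \<le> 1 / (2 * c / 3)"
      using assms(2) by (intro divide_left_mono) auto
    then show "1 / \<theta> j \<le> 3 / (2 * c)" by simp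
    show "1 / \<theta>\<^sub>1 \<le> 3"
      using assms(4) by (simp add: divide_le_eq)
  qed
  also have "\<dots> = (real h - 1) * (3 / (2 * c) + 3)"
    using assms(1) by simp
  finally show ?thesis .
qed

lemma trace_bound_slack:
  fixes u :: real
  assumes "0 \<le> u" "1 \<le> h"
  shows "(real h - 1) * (u + 3) \<le> 2 ^ b * (6 * real h + u) + real h * u"
proof -
  have "(real h - 1) * (u + 3) \<le> (6 * real h + u) + real h * u"
    using assms by (simp add: algebra_simps)
  also have "\<dots> \<le> 2 ^ b * (6 * real h + u) + real h * u"
    using assms by (simp add: mult_le_cancel_right1)
  finally show ?thesis .
qed

theorem mainTheorem8:
  fixes d h b :: nat and p :: "nat \<Rightarrow> real" and \<pi> :: "nat \<Rightarrow> nat" and B :: real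
    and Y :: "'y set" and W :: "'y \<Rightarrow> nat \<Rightarrow> real"
  assumes "in_simplex d p"
    and "\<pi> permutes {1..d}"
    and "\<forall>i j. 1 \<le> i \<and> i \<le> j \<and> j \<le> d \<longrightarrow> p (\<pi> j) \<le> p (\<pi> i)"
    and "1/2 < p (\<pi> 1)" and "p (\<pi> 1) < 5/6"
    and "2 \<le> h" and "h \<le> d" and "0 < p (\<pi> h)"
    and "0 < B" and "B \<le> p (\<pi> h) / 3"
    and "is_channel d Y W" and "real (card Y) \<le> 2 ^ b"
  shows "\<forall>\<theta>'. (\<forall>i\<in>{2..h}. \<bar>\<theta>' i - p (\<pi> i)\<bar> \<le> B) \<longrightarrow>
           in_simplex d (sub_model d p \<pi> h \<theta>') \<and>
           fisher_trace d p \<pi> h Y W \<theta>'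
             \<le> 2 ^ b * (6 * real h + 3 / (2 * p (\<pi> h))) + 3 * real h / (2 * p (\<pi> h))"
proof (intro allI impI conjI)
  fix \<theta> assume near: "\<forall>i\<in>{2..h}. \<bar>\<theta> i - p (\<pi> i)\<bar> \<le> B"
  note coord = sub_model_neighbourhood_bounds(1)[OF assms(1-4,6,7,10) near]
  note first = sub_model_neighbourhood_bounds(2)[OF assms(1-4,6,7,10) near]
  have "\<forall>j\<in>{2..h}. 0 < \<theta> j"
  proof
    fix j assume "j \<in> {2..h}"
    with coord have "2 * p (\<pi> h) / 3 \<le> \<theta> j" by blast
    with assms(8) show "0 < \<theta> j" by linarith
  qed
  then have pos: "\<forall>i\<in>{1..h}. 0 < sub_model d p \<pi> h \<theta> (\<pi> i)"
    using sub_model_pos[OF assms(2,7)] first by simp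
  then show simplex: "in_simplex d (sub_model d p \<pi> h \<theta>)"
    using sub_model_in_simplex[OF assms(1,2,6,7)] by (simp add: less_imp_le)
  have "fisher_trace d p \<pi> h Y W \<theta> \<le> (\<Sum>j=2..h. 1 / \<theta> j + 1 / sub_model d p \<pi> h \<theta> (\<pi> 1))"
    by (rule fisher_trace_le_sum_inverse[OF assms(11,2,6,7) simplex pos])
  also have "\<dots> \<le> (real h - 1) * (3 / (2 * p (\<pi> h)) + 3)"
    by (rule sum_inverse_weights_le[OF assms(6,8) coord first])
  also have "\<dots> \<le> 2 ^ b * (6 * real h + 3 / (2 * p (\<pi> h))) + real h * (3 / (2 * p (\<pi> h)))"
    using assms(6,8) by (intro trace_bound_slack) simp_all
  finally show "fisher_trace d p \<pi> h Y W \<theta>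
    \<le> 2 ^ b * (6 * real h + 3 / (2 * p (\<pi> h))) + 3 * real h / (2 * p (\<pi> h))"
    by simp
qed

end
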